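(* Consider the system $\mathbf{x}_{k+1}=f_k(\mathbf{x}_k,\mathbf{w}_k)$, $\mathbf{y}_k=g_k(\mathbf{x}_k,\mathbf{v}_k)$, $k\in\mathbb{N}_0$, of uncertain variables on a common sample space $\Omega$ (no relation assumption is imposed on $\mathbf{x}_0,\mathbf{w}_{0:k},\mathbf{v}_{0:k}$). Then: (i) (Prediction) for every $k\in\mathbb{Z}_+$ and every $y_{0:k-1}\in\llbracket\mathbf{y}_{0:k-1}\rrbracket$, \[ \llbracket\mathbf{x}_k\,|\,y_{0:k-1}\rrbracket=\bigcup_{x_{k-1}\in\llbracket\mathbf{x}_{k-1}|y_{0:k-1}\rrbracket} f_{k-1}\big(x_{k-1},\llbracket\mathbf{w}_{k-1}\,|\,x_{k-1},y_{0:k-1}\rrbracket\big); \] (ii) (Update) for every $k\in\mathbb{N}_0$ and every $y_{0:k}\in\llbracket\mathbf{y}_{0:k}\rrbracket$, \[ \llbracket\mathbf{x}_k\,|\,y_{0:k}\rrbracket=\Big\{x_k\in\llbracket\mathbf{x}_k\,|\,y_{0:k-1}\rrbracket:\ g_k\big(x_k,\llbracket\mathbf{v}_k\,|\,x_k,y_{0:k-1}\rrbracket\big)\cap\{y_k\}\neq\emptyset\Big\}, \] with the conventions $\llbracket\mathbf{x}_0\,|\,y_{0:-1}\rrbracket:=\llbracket\mathbf{x}_0\rrbracket$ and $\llbracket\mathbf{v}_0\,|\,x_0,y_{0:-1}\rrbracket:=\llbracket\mathbf{v}_0\,|\,x_0\rrbracket$; (iii) (Optimality) the estimator $X_k^*(y_{0:k}):=\llbracket\mathbf{x}_k\,|\,y_{0:k}\rrbracket$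 is the optimal SMF: it contains every possible $x_k$ given $y_{0:k}$, and $X_k^*(y_{0:k})\subseteq X_k'(y_{0:k})$ for every SMF $X_k'$ and every $y_{0:k}$.
   Context: Uncertain variables: fix a nonempty set $\Omega$. An uncertain variable is a (measurable) function $\mathbf{x}\colon\Omega\to\mathcal{X}$; a realization is $x=\mathbf{x}(\omega)$. Tuples such as $\mathbf{y}_{0:k}:=(\mathbf{y}_0,\dots,\mathbf{y}_k)$ are regarded as uncertain variables $\omega\mapsto(\mathbf{y}_0(\omega),\dots,\mathbf{y}_k(\omega))$, with realizations $y_{0:k}=(y_0,\dots,y_k)$. Range: $\llbracket\mathbf{x}\rrbracket:=\{\mathbf{x}(\omega):\omega\in\Omega\}$. Conditional range: $\llbracket\mathbf{x}\,|\,y\rrbracket:=\{\mathbf{x}(\omega):\omega\in\Omega,\ \mathbf{y}(\omega)=y\}$; conditioning on several values means conditioning on the tuple, e.g. $\llbracket\mathbf{w}\,|\,x,y_{0:k-1}\rrbracket=\{\mathbf{w}(\omega):\mathbf{x}(\omega)=x,\ \mathbf{y}_{0:k-1}(\omega)=y_{0:k-1}\}$. System: $\mathbf{x}_k$ takes values in $\llbracket\mathbf{x}_k\rrbracket\subseteq\mathbb{R}^n$, process noise $\mathbf{w}_k$ in $\llbracket\mathbf{w}_k\rrbracket\subseteq\mathbb{R}^p$, measurement $\mathbf{y}_k$ in $\llbracket\mathbf{y}_k\rrbracket\subseteq\mathbb{R}^m$, measurement noise $\mathbf{v}_k$ in $\llbracket\mathbf{v}_k\rrbracket\subseteq\mathbb{R}^q$;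 $f_k\colon\llbracket\mathbf{x}_k\rrbracket\times\llbracket\mathbf{w}_k\rrbracket\to\llbracket\mathbf{x}_{k+1}\rrbracket$ and $g_k\colon\llbracket\mathbf{x}_k\rrbracket\times\llbracket\mathbf{v}_k\rrbracket\to\llbracket\mathbf{y}_k\rrbracket$ are maps, and $\mathbf{x}_{k+1}(\omega)=f_k(\mathbf{x}_k(\omega),\mathbf{w}_k(\omega))$, $\mathbf{y}_k(\omega)=g_k(\mathbf{x}_k(\omega),\mathbf{v}_k(\omega))$ for all $\omega$. For a map $h$ and set $S$, $h(x,S):=\{h(x,s):s\in S\}$. Set-Membership Filter (SMF): a family of set-valued maps $X_k$, $k\in\mathbb{N}_0$, such that $X_k(y_{0:k})$ contains every possible state given the measurements, i.e. $\{\mathbf{x}_k(\omega):\mathbf{y}_{0:k}(\omega)=y_{0:k}\}\subseteq X_k(y_{0:k})$; an SMF $X^*$ is optimal if $X_k^*(y_{0:k})\subseteq X_k'(y_{0:k})$ for every SMF $X'$, every $k$ and every $y_{0:k}$. *)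

theory Defs
  imports "HOL-Analysis.Analysis"
begin

text \<open>A realization of a tuple of measurements y_{0:k-1} is represented as a list
  of length k; hist y k is the uncertain variable y_{0:k-1}.
  For k = 0 it is the constant empty list, so conditioning on it gives the
  unconditional range (the convention y_{0:-1}).\<close>

definition hist :: "(nat \<Rightarrow> 'o \<Rightarrow> 'a) \<Rightarrow> nat \<Rightarrow> 'o \<Rightarrow> 'a list" where
  "hist y k = (\<lambda>\<omega>. map (\<lambda>i. y i \<omega>) [0..<k])"

definition cond_range :: "('o \<Rightarrow> 'a) \<Rightarrow> ('o \<Rightarrow> 'b) \<Rightarrow> 'b \<Rightarrow> 'a set" where
  "cond_range X Y yv = {X \<omega> | \<omega>. Y \<omega> = yv}"

definition is_SMF :: "(nat \<Rightarrow> 'o \<Rightarrow> 'x) \<Rightarrow> (nat \<Rightarrow> 'o \<Rightarrow> 'y) \<Rightarrow> (nat \<Rightarrow> 'y list \<Rightarrow> 'x set) \<Rightarrow> bool" where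
  "is_SMF x y X \<longleftrightarrow> (\<forall>k ys. {x k \<omega> | \<omega>. hist y (Suc k) \<omega> = ys} \<subseteq> X k ys)"

definition is_optimal_SMF :: "(nat \<Rightarrow> 'o \<Rightarrow> 'x) \<Rightarrow> (nat \<Rightarrow> 'o \<Rightarrow> 'y) \<Rightarrow> (nat \<Rightarrow> 'y list \<Rightarrow> 'x set) \<Rightarrow> bool" where
  "is_optimal_SMF x y X \<longleftrightarrow> is_SMF x y X \<and>
     (\<forall>X'. is_SMF x y X' \<longrightarrow> (\<forall>k ys. X k ys \<subseteq> X' k ys))"

end

theory Submission
  imports Defs
begin

text \<open>All three claims are pure bookkeeping on the sample space. A state x_k can follow the
  measurements exactly when some outcome produces it together with them; pushing this outcome
  through x_k = f(x_{k-1}, w_{k-1}) or y_k = g(x_k, v_k) gives the prediction and update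
  formulas, and any set-membership filter must contain each such state, which gives
  optimality.\<close>

lemma cond_range_cong:
  assumes "\<And>\<omega>. Y \<omega> = c \<longleftrightarrow> Y' \<omega> = c'"
  shows "cond_range X Y c = cond_range X Y' c'"
  using assms by (simp add: cond_range_def)

lemma cond_range_of_dynamics:
  assumes "\<And>\<omega>. X' \<omega> = F (X \<omega>) (W \<omega>)"
  shows "cond_range X' Y c =
    (\<Union>a \<in> cond_range X Y c. F a ` cond_range W (\<lambda>\<omega>. (X \<omega>, Y \<omega>)) (a, c))"
  using assms unfolding cond_range_def by (auto; metis)

lemma cond_range_of_measurement:
  assumes "\<And>\<omega>. Z \<omega> = G (X \<omega>) (V \<omega>)"
  shows "cond_range X (\<lambda>\<omega>. (Y \<omega>, Z \<omega>)) (c, z) =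
    {a \<in> cond_range X Y c. G a ` cond_range V (\<lambda>\<omega>. (X \<omega>, Y \<omega>)) (a, c) \<inter> {z} \<noteq> {}}"
  using assms unfolding cond_range_def by (auto; metis)

lemma hist_Suc: "hist y (Suc k) \<omega> = hist y k \<omega> @ [y k \<omega>]"
  by (simp add: hist_def)

lemma length_hist [simp]: "length (hist y k \<omega>) = k"
  by (simp add: hist_def)

lemma hist_Suc_eq_iff:
  assumes "length ys = Suc k"
  shows "hist y (Suc k) \<omega> = ys \<longleftrightarrow> (hist y k \<omega>, y k \<omega>) = (take k ys, ys ! k)"
proof -
  have "ys = take k ys @ [ys ! k]"
    using assms by (metis lessI order_refl take_Suc_conv_app_nth take_all_iff)
  then show ?thesis
    by (metis append1_eq_conv hist_Suc prod.inject)
qed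

lemma is_optimal_SMF_cond_range:
  "is_optimal_SMF x y (\<lambda>k ys. cond_range (x k) (hist y (Suc k)) ys)"
  unfolding is_optimal_SMF_def is_SMF_def cond_range_def by auto

theorem theorem1:
  fixes x :: "nat \<Rightarrow> 'o \<Rightarrow> real ^ 'n"
    and w :: "nat \<Rightarrow> 'o \<Rightarrow> real ^ 'p"
    and y :: "nat \<Rightarrow> 'o \<Rightarrow> real ^ 'm"
    and v :: "nat \<Rightarrow> 'o \<Rightarrow> real ^ 'q"
    and f :: "nat \<Rightarrow> real ^ 'n \<Rightarrow> real ^ 'p \<Rightarrow> real ^ 'n"
    and g :: "nat \<Rightarrow> real ^ 'n \<Rightarrow> real ^ 'q \<Rightarrow> real ^ 'm"
  assumes dyn: "\<And>k \<omega>. x (Suc k) \<omega> = f k (x k \<omega>) (w k \<omega>)"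
    and meas: "\<And>k \<omega>. y k \<omega> = g k (x k \<omega>) (v k \<omega>)"
  shows
    "(\<forall>k ys. k \<ge> 1 \<longrightarrow> ys \<in> range (hist y k) \<longrightarrow>
        cond_range (x k) (hist y k) ys =
        (\<Union>xp \<in> cond_range (x (k - 1)) (hist y k) ys.
            f (k - 1) xp ` cond_range (w (k - 1)) (\<lambda>\<omega>. (x (k - 1) \<omega>, hist y k \<omega>)) (xp, ys)))
     \<and> (\<forall>k ys. ys \<in> range (hist y (Suc k)) \<longrightarrow>
        cond_range (x k) (hist y (Suc k)) ys =
        {xk \<in> cond_range (x k) (hist y k) (take k ys).
           g k xk ` cond_range (v k) (\<lambda>\<omega>. (x k \<omega>, hist y k \<omega>)) (xk, take k ys) \<inter> {ys ! k} \<noteq> {}})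
     \<and> is_optimal_SMF x y (\<lambda>k ys. cond_range (x k) (hist y (Suc k)) ys)"
proof (intro conjI allI impI is_optimal_SMF_cond_range)
  fix k :: nat and ys
  assume "k \<ge> 1"
  then have "\<And>\<omega>. x k \<omega> = f (k - 1) (x (k - 1) \<omega>) (w (k - 1) \<omega>)"
    using dyn[of "k - 1"] by simp
  then show "cond_range (x k) (hist y k) ys =
      (\<Union>xp \<in> cond_range (x (k - 1)) (hist y k) ys.
          f (k - 1) xp ` cond_range (w (k - 1)) (\<lambda>\<omega>. (x (k - 1) \<omega>, hist y k \<omega>)) (xp, ys))"
    by (rule cond_range_of_dynamics)
next
  fix k :: nat and ys
  assume "ys \<in> range (hist y (Suc k))"
  then have "length ys = Suc k" by auto
  then have "cond_range (x k) (hist y (Suc k)) ys =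
      cond_range (x k) (\<lambda>\<omega>. (hist y k \<omega>, y k \<omega>)) (take k ys, ys ! k)"
    by (intro cond_range_cong hist_Suc_eq_iff)
  also have "\<dots> = {xk \<in> cond_range (x k) (hist y k) (take k ys).
      g k xk ` cond_range (v k) (\<lambda>\<omega>. (x k \<omega>, hist y k \<omega>)) (xk, take k ys) \<inter> {ys ! k} \<noteq> {}}"
    using meas by (rule cond_range_of_measurement)
  finally show "cond_range (x k) (hist y (Suc k)) ys = \<dots>" .
qed

end
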